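(* Let $f\in\mathcal{S}^*_{nc}$. Then: (1) For $\alpha\in(0,1)$, let $r_\alpha\in(0,1)$ be the root of $(1-r)-\alpha\cos r=0$. Then $\operatorname{Re}\frac{zf'(z)}{f(z)}>\alpha$ for all $|z|<r_\alpha$ (i.e. $f$ is starlike of order $\alpha$ in $|z|<r_\alpha$). (2) For $\beta>1$, let $r_\beta=r_0(\beta)$ if $1<\beta<2/\cos 1$, where $r_0(\beta)$ is the smallest positive root of $1+r=\beta\cos r$, and $r_\beta=1$ if $\beta\ge 2/\cos 1$. Then $\operatorname{Re}\frac{zf'(z)}{f(z)}<\beta$ for all $|z|<r_\beta$. Both radii are sharp, i.e. they cannot be replaced by larger numbers for the whole class $\mathcal{S}^*_{nc}$.
   Context: $\mathbb{D}$ is the open unit disk. $\mathcal{A}$ is the class of analytic $f$ on $\mathbb{D}$ with $f(0)=0$, $f'(0)=1$. For analytic $f,g$ on $\mathbb{D}$, $f\prec g$ means $f=g\circ\omega$ for some analytic $\omega:\mathbb{D}\to\mathbb{D}$ with $\omega(0)=0$. $\mathcal{S}^*_{nc}=\{f\in\mathcal{A}: zf'(z)/f(z)\prec (1+z)/\cos z\}$. *)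

theory Defs
  imports "HOL-Analysis.Analysis"
begin

definition subordinate :: "(complex \<Rightarrow> complex) \<Rightarrow> (complex \<Rightarrow> complex) \<Rightarrow> bool" where
  "subordinate F G \<longleftrightarrow>
     (\<exists>\<omega>. \<omega> holomorphic_on ball 0 1 \<and> \<omega> 0 = 0 \<and> \<omega> ` ball 0 1 \<subseteq> ball 0 1 \<and>
          (\<forall>z\<in>ball 0 1. F z = G (\<omega> z)))"

definition classA :: "(complex \<Rightarrow> complex) set" where
  "classA = {f. f holomorphic_on ball 0 1 \<and> f 0 = 0 \<and> deriv f 0 = 1}"

text \<open>z f'(z)/f(z), with its removable value 1 at the origin (f \<in> \<A>).\<close>
definition zf'_over_f :: "(complex \<Rightarrow> complex) \<Rightarrow> complex \<Rightarrow> complex" where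
  "zf'_over_f f z = (if z = 0 then 1 else z * deriv f z / f z)"

definition Snc :: "(complex \<Rightarrow> complex) set" where
  "Snc = {f \<in> classA. subordinate (zf'_over_f f) (\<lambda>w. (1 + w) / cos w)}"

end

theory Submission
  imports Defs "HOL-Complex_Analysis.Conformal_Mappings"
begin

text \<open>
  By Schwarz's lemma, z f'(z) / f(z) = \<phi>(w) for \<phi>(w) = (1 + w) / cos w and some w with
  |w| \<le> |z|, and the function with z f'(z) / f(z) = \<phi>(z) belongs to the class. So everything
  reduces to the range of Re \<phi> on the circle |w| = \<rho> < 1: it lies between
  \<phi>(-\<rho>) = (1 - \<rho>) / cos \<rho> and \<phi>(\<rho>) = (1 + \<rho>) / cos \<rho>. The upper bound follows from
  |cos w| \<ge> cos |w|. For the lower bound, reflecting w into the left half plane only decreases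
  Re \<phi>(w), and there Re \<phi>(-a + i y) is compared with (1 - \<rho>) / cos \<rho> using that
  (1 - s) / cos s + 3 s / 4 decreases on [0, 1], together with Taylor bounds for cos, sin, cosh
  and sinh; the polynomial inequalities that remain are certified by Bernstein expansions.
  As (1 - s) / cos s decreases and (1 + s) / cos s increases, the two radii follow, and the
  extremal function shows that they are sharp.
\<close>

section \<open>Taylor bounds for cos, sin, cosh and sinh\<close>

lemma cos_Taylor_bounds:
  fixes x :: real
  assumes "0 \<le> x" "x \<le> pi/2"
  shows "1 - x\<^sup>2/2 \<le> cos x" and "cos x \<le> 1 - x\<^sup>2/2 + x^4/24"
proof -
  have "1 - x\<^sup>2/2 \<le> cos x \<and> cos x \<le> 1 - x\<^sup>2/2 + x^4/24"
  proof (cases "x = 0")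
    case False
    then obtain t where t: "0 < t" "t < x"
      and cos_x: "cos x = (\<Sum>m<4. cos_coeff m * x ^ m) + cos (t + 1/2 * real 4 * pi) / fact 4 * x ^ 4"
      using Maclaurin_cos_expansion2[of x 4] assms by auto
    have "(\<Sum>m<4. cos_coeff m * x ^ m) = 1 - x\<^sup>2/2"
      by (simp add: lessThan_nat_numeral cos_coeff_def power2_eq_square)
    moreover have "cos (t + 1/2 * real 4 * pi) = cos t"
      by (simp add: cos_add)
    ultimately have "cos x = 1 - x\<^sup>2/2 + cos t * x^4 / 24"
      using cos_x by (simp add: fact_numeral)
    moreover have "0 \<le> cos t"
      using t assms by (intro cos_ge_zero) auto
    ultimately show ?thesis
      using mult_left_le_one_le[of "x^4" "cos t"] assms by simp
  qed simp
  then show "1 - x\<^sup>2/2 \<le> cos x" "cos x \<le> 1 - x\<^sup>2/2 + x^4/24"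
    by auto
qed

lemma sin_lower_Taylor_cubic:
  fixes x :: real
  assumes "0 \<le> x" "x \<le> pi/2"
  shows "x - x^3/6 \<le> sin x"
proof (cases "x = 0")
  case False
  then obtain t where t: "0 < t" "t < x"
    and sin_x: "sin x = (\<Sum>m<5. sin_coeff m * x ^ m) + sin (t + 1/2 * real 5 * pi) / fact 5 * x ^ 5"
    using Maclaurin_sin_expansion3[of 5 x] assms by auto
  have "(\<Sum>m<5. sin_coeff m * x ^ m) = x - x^3/6"
    by (simp add: lessThan_nat_numeral sin_coeff_def fact_numeral)
  moreover have "sin (t + 1/2 * real 5 * pi) = cos t"
    using sin_periodic[of "t + pi/2"] by (simp add: sin_add algebra_simps)
  ultimately have "sin x = x - x^3/6 + cos t * x^5 / 120"
    using sin_x by (simp add: fact_numeral)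
  moreover have "0 \<le> cos t"
    using t assms by (intro cos_ge_zero) auto
  ultimately show ?thesis
    using assms by simp
qed simp

lemma cosh_Maclaurin_quartic:
  fixes y :: real
  obtains t1 t2 where "\<bar>t1\<bar> \<le> \<bar>y\<bar>" "\<bar>t2\<bar> \<le> \<bar>y\<bar>"
    "cosh y = 1 + y\<^sup>2/2 + (exp t1 + exp t2)/48 * y^4"
proof -
  obtain t1 where t1: "\<bar>t1\<bar> \<le> \<bar>y\<bar>"
    and exp_y: "exp y = (\<Sum>m<4. y ^ m / fact m) + exp t1 / fact 4 * y ^ 4"
    using Maclaurin_exp_le by blast
  obtain t2 where t2: "\<bar>t2\<bar> \<le> \<bar>-y\<bar>"
    and exp_minus_y: "exp (-y) = (\<Sum>m<4. (-y) ^ m / fact m) + exp t2 / fact 4 * (-y) ^ 4"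
    using Maclaurin_exp_le by blast
  have "cosh y = (exp y + exp (-y)) / 2"
    by (simp add: cosh_def)
  also have "\<dots> = 1 + y\<^sup>2/2 + (exp t1 + exp t2)/48 * y^4"
    unfolding exp_y exp_minus_y by (simp add: eval_nat_numeral field_simps)
  finally show ?thesis
    using that t1 t2 by simp
qed

lemma sinh_Maclaurin_cubic:
  fixes y :: real
  obtains t1 t2 where "\<bar>t1\<bar> \<le> \<bar>y\<bar>" "\<bar>t2\<bar> \<le> \<bar>y\<bar>"
    "sinh y = y + (exp t1 + exp t2)/12 * y^3"
proof -
  obtain t1 where t1: "\<bar>t1\<bar> \<le> \<bar>y\<bar>"
    and exp_y: "exp y = (\<Sum>m<3. y ^ m / fact m) + exp t1 / fact 3 * y ^ 3"
    using Maclaurin_exp_le by blast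
  obtain t2 where t2: "\<bar>t2\<bar> \<le> \<bar>-y\<bar>"
    and exp_minus_y: "exp (-y) = (\<Sum>m<3. (-y) ^ m / fact m) + exp t2 / fact 3 * (-y) ^ 3"
    using Maclaurin_exp_le by blast
  have "sinh y = (exp y - exp (-y)) / 2"
    by (simp add: sinh_def)
  also have "\<dots> = y + (exp t1 + exp t2)/12 * y^3"
    unfolding exp_y exp_minus_y by (simp add: eval_nat_numeral field_simps)
  finally show ?thesis
    using that t1 t2 by simp
qed

lemma cosh_lower_Taylor_quadratic:
  fixes y :: real
  shows "1 + y\<^sup>2/2 \<le> cosh y"
proof -
  obtain t1 t2 where "cosh y = 1 + y\<^sup>2/2 + (exp t1 + exp t2)/48 * y^4"
    using cosh_Maclaurin_quartic by blast
  then show ?thesis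
    by (simp add: add_pos_pos less_imp_le)
qed

lemma cosh_minus_one_le:
  fixes y :: real
  assumes "\<bar>y\<bar> \<le> 1"
  shows "cosh y - 1 \<le> 5/8 * y\<^sup>2"
proof -
  obtain t1 t2 where t: "\<bar>t1\<bar> \<le> \<bar>y\<bar>" "\<bar>t2\<bar> \<le> \<bar>y\<bar>"
    and cosh_y: "cosh y = 1 + y\<^sup>2/2 + (exp t1 + exp t2)/48 * y^4"
    using cosh_Maclaurin_quartic by blast
  have "exp t1 \<le> 3" "exp t2 \<le> 3"
    using t assms exp_le by (smt (verit) exp_le_cancel_iff)+
  then have "(exp t1 + exp t2)/48 * y^4 \<le> 1/8 * y^4"
    by (intro mult_right_mono) auto
  moreover have "y^4 \<le> y\<^sup>2"
  proof -
    have "y\<^sup>2 \<le> 1"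
      using assms abs_square_le_1 by blast
    have "y^4 = y\<^sup>2 * y\<^sup>2"
      by (simp add: eval_nat_numeral)
    also have "\<dots> \<le> y\<^sup>2"
      using mult_left_le_one_le[of "y\<^sup>2" "y\<^sup>2"] \<open>y\<^sup>2 \<le> 1\<close> by simp
    finally show ?thesis .
  qed
  ultimately show ?thesis
    using cosh_y by simp
qed

lemma sinh_upper_cubic:
  fixes y :: real
  assumes "0 \<le> y" "y \<le> 1"
  shows "sinh y \<le> y + y^3/2"
proof -
  obtain t1 t2 where t: "\<bar>t1\<bar> \<le> \<bar>y\<bar>" "\<bar>t2\<bar> \<le> \<bar>y\<bar>"
    and sinh_y: "sinh y = y + (exp t1 + exp t2)/12 * y^3"
    using sinh_Maclaurin_cubic by blast
  have "exp t1 \<le> 3" "exp t2 \<le> 3"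
    using t assms exp_le by (smt (verit) exp_le_cancel_iff)+
  then have "(exp t1 + exp t2)/12 * y^3 \<le> 1/2 * y^3"
    using assms by (intro mult_right_mono) auto
  then show ?thesis
    using sinh_y by simp
qed

lemma abs_le_abs_sinh: "\<bar>y\<bar> \<le> \<bar>sinh (y::real)\<bar>"
  using real_le_abs_sinh[of y] by (simp add: sinh_def exp_minus)

lemma power2_le_mult_sinh: "y\<^sup>2 \<le> y * sinh (y::real)"
proof -
  have "y\<^sup>2 = \<bar>y\<bar> * \<bar>y\<bar>"
    by (simp add: power2_eq_square)
  also have "\<dots> \<le> \<bar>y\<bar> * \<bar>sinh y\<bar>"
    by (rule mult_left_mono[OF abs_le_abs_sinh]) simp
  also have "\<dots> = y * sinh y"
    by (cases "0 \<le> y") (simp_all add: abs_of_nonneg abs_of_neg)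
  finally show ?thesis .
qed

lemma power2_le_sinh_power2: "y\<^sup>2 \<le> (sinh (y::real))\<^sup>2"
  using abs_le_abs_sinh[of y] by (metis abs_ge_zero power2_abs power_mono)

lemma mult_sinh_le_quartic:
  fixes y :: real
  assumes "\<bar>y\<bar> \<le> 1"
  shows "y * sinh y \<le> y\<^sup>2 + y^4/2"
proof -
  have "y * sinh y = \<bar>y\<bar> * sinh \<bar>y\<bar>"
    by (cases "0 \<le> y") (simp_all add: abs_of_nonneg abs_of_neg)
  also have "\<dots> \<le> \<bar>y\<bar> * (\<bar>y\<bar> + \<bar>y\<bar>^3/2)"
    using sinh_upper_cubic[of "\<bar>y\<bar>"] assms by (intro mult_left_mono) auto
  also have "\<dots> = y\<^sup>2 + y^4/2"
    by (simp add: power2_eq_square eval_nat_numeral field_simps)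
  finally show ?thesis .
qed

section \<open>Monotonicity of (1 - s) / cos s and (1 + s) / cos s\<close>

lemma one_minus_mult_sin_plus_cos_sq_le_cos:
  fixes s :: real
  assumes "0 \<le> s" "s \<le> 1"
  shows "(1 - s) * sin s + 3/4 * (cos s)\<^sup>2 \<le> cos s"
proof -
  have s_pi: "s \<le> pi/2"
    using assms pi_gt3 by linarith
  note cos_bounds = cos_Taylor_bounds[OF assms(1) s_pi]
  have "(1 - s) * sin s \<le> (1 - s) * s"
    using assms sin_x_le_x by (intro mult_left_mono) auto
  moreover have "(cos s)\<^sup>2 \<le> (1 - s\<^sup>2/2 + s^4/24)\<^sup>2"
    using cos_bounds assms s_pi by (intro power_mono) (auto intro: cos_ge_zero)
  \<comment> \<open>Bernstein expansion on [0,1]: all coefficients are nonnegative.\<close>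
  moreover have "0 \<le> 1 - s + s\<^sup>2/2 - 3/4 * (1 - s\<^sup>2/2 + s^4/24)\<^sup>2"
  proof -
    have "1 - s + s\<^sup>2/2 - 3/4 * (1 - s\<^sup>2/2 + s^4/24)\<^sup>2 =
      1/4 * (1 - s)^8 + s * (1 - s)^7 + 5/4 * s^2 * (1 - s)^6 + 1/2 * s^3 * (1 - s)^5
      + s^4 * (1 - s)^4 + 3 * s^5 * (1 - s)^3 + 105/32 * s^6 * (1 - s)^2
      + 25/16 * s^7 * (1 - s) + 215/768 * s^8"
      by (simp add: field_simps power_numeral_reduce power2_eq_square)
    also have "0 \<le> \<dots>"
      using assms by (intro add_nonneg_nonneg mult_nonneg_nonneg zero_le_power) auto
    finally show ?thesis .
  qed
  ultimately show ?thesis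
    using cos_bounds(1) by (simp add: algebra_simps power2_eq_square)
qed

lemma one_minus_div_cos_slope:
  fixes a b :: real
  assumes "0 \<le> a" "a \<le> b" "b \<le> 1"
  shows "(1 - b) / cos b + 3/4 * b \<le> (1 - a) / cos a + 3/4 * a"
proof -
  have cos_pos: "0 < cos s" if "0 \<le> s" "s \<le> 1" for s :: real
    using that pi_gt3 by (intro cos_gt_zero_pi) auto
  let ?G = "\<lambda>s::real. (1 - s) / cos s + 3/4 * s"
  show ?thesis
  proof (rule DERIV_nonpos_imp_decreasing_open[OF assms(2)])
    fix s assume s: "a < s" "s < b"
    then have s01: "0 \<le> s" "s \<le> 1"
      using assms by auto
    have "(?G has_real_derivative ((1 - s) * sin s - cos s) / (cos s)\<^sup>2 + 3/4) (at s)"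
      using cos_pos[OF s01] by (auto intro!: derivative_eq_intros simp: power2_eq_square field_simps)
    moreover have "((1 - s) * sin s - cos s) / (cos s)\<^sup>2 + 3/4
        = ((1 - s) * sin s + 3/4 * (cos s)\<^sup>2 - cos s) / (cos s)\<^sup>2"
      using cos_pos[OF s01] by (simp add: field_simps)
    moreover have "(1 - s) * sin s + 3/4 * (cos s)\<^sup>2 - cos s \<le> 0"
      using one_minus_mult_sin_plus_cos_sq_le_cos[OF s01] by simp
    ultimately show "\<exists>y. (?G has_real_derivative y) (at s) \<and> y \<le> 0"
      by (metis divide_nonpos_nonneg zero_le_power2)
  next
    show "continuous_on {a..b} ?G"
      using cos_pos assms by (intro continuous_intros) (auto simp: less_imp_neq[symmetric])
  qed
qed

lemma one_minus_div_cos_strict_antimono: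
  fixes s u :: real
  assumes "0 \<le> s" "s < u" "u \<le> 1"
  shows "(1 - u) / cos u < (1 - s) / cos s"
  using one_minus_div_cos_slope[of s u] assms by linarith

lemma one_plus_div_cos_strict_mono:
  fixes s u :: real
  assumes "0 \<le> s" "s < u" "u < pi/2"
  shows "(1 + s) / cos s < (1 + u) / cos u"
proof -
  have "0 < cos u"
    using assms by (intro cos_gt_zero_pi) auto
  moreover have "cos u \<le> cos s"
    using assms by (intro cos_monotone_0_pi_le) auto
  ultimately have "(1 + s) / cos s \<le> (1 + s) / cos u"
    using assms by (intro divide_left_mono) auto
  also have "\<dots> < (1 + u) / cos u"
    using \<open>0 < cos u\<close> assms by (intro divide_strict_right_mono) auto
  finally show ?thesis .
qed

section \<open>The real part of (1 + w) / cos w\<close>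

lemma mult_sinh_le_cos_mult_cosh:
  fixes x y :: real
  assumes "0 \<le> x" "x\<^sup>2 + y\<^sup>2 \<le> 1"
  shows "y * sinh y \<le> cos x * cosh y"
proof -
  define t where "t = y\<^sup>2"
  have t: "0 \<le> t" "x\<^sup>2 \<le> 1 - t"
    using assms by (simp_all add: t_def)
  have t_le_1: "t \<le> 1"
    using t(2) zero_le_power2[of x] by linarith
  have "x\<^sup>2 \<le> 1"
    using t by linarith
  then have x_pi: "x \<le> pi/2"
    using pi_gt3 by (auto simp: abs_square_le_1 abs_le_iff)
  have "y * sinh y \<le> t + t\<^sup>2/2"
    using mult_sinh_le_quartic[of y] t_le_1 by (simp add: t_def abs_square_le_1 flip: power_mult)
  also have "\<dots> \<le> (1 + t)/2 * (1 + t/2)"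
    using mult_left_le_one_le[of t t] t t_le_1 by (simp add: field_simps power2_eq_square)
  also have "\<dots> \<le> (1 - x\<^sup>2/2) * (1 + t/2)"
    using t by (intro mult_right_mono) auto
  also have "\<dots> \<le> cos x * cosh y"
    using cos_Taylor_bounds(1)[OF assms(1) x_pi] cosh_lower_Taylor_quadratic[of y] t
      cos_ge_zero[of x] assms(1) x_pi
    by (intro mult_mono) (auto simp: t_def)
  finally show ?thesis .
qed

lemma mult_sin_sinh_le_mult_cos_cosh:
  fixes x y :: real
  assumes "0 \<le> x" "x\<^sup>2 + y\<^sup>2 \<le> 1"
  shows "y * sin x * sinh y \<le> x * cos x * cosh y"
proof -
  have "x\<^sup>2 \<le> 1"
    using assms zero_le_power2[of y] by linarith
  then have "x \<le> pi"
    using pi_gt3 by (auto simp: abs_square_le_1 abs_le_iff)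
  then have "0 \<le> sin x" "sin x \<le> x"
    using assms(1) by (auto intro!: sin_ge_zero sin_x_le_x)
  moreover have "0 \<le> y * sinh y"
    by (auto simp: zero_le_mult_iff)
  ultimately have "sin x * (y * sinh y) \<le> x * (cos x * cosh y)"
    using mult_mono[of "sin x" x "y * sinh y" "cos x * cosh y"] mult_sinh_le_cos_mult_cosh[OF assms]
      assms(1) by simp
  then show ?thesis
    by (simp add: ac_simps)
qed

lemma cos_sin_polynomial_estimate:
  fixes a :: real
  assumes "0 \<le> a" "a \<le> 1"
  shows "5/8 * (1 - a\<^sup>2) * (2 - (cos a)\<^sup>2) \<le> 3/4 * (cos a)^3 + (1 + a) * cos a * sin a"
proof -
  have a_pi: "a \<le> pi/2"
    using assms pi_gt3 by linarith
  define c s where "c = 1 - a\<^sup>2/2" and "s = a - a^3/6"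
  have "a^3 \<le> a"
    using power_decreasing[of 1 3 a] assms by simp
  moreover have a2: "a\<^sup>2 \<le> 1"
    using assms by (simp add: power_le_one)
  ultimately have cs: "0 \<le> c" "0 \<le> s"
    using assms by (simp_all add: c_def s_def)
  have "c \<le> cos a" "s \<le> sin a"
    using cos_Taylor_bounds(1) sin_lower_Taylor_cubic assms a_pi by (simp_all add: c_def s_def)
  then have "c\<^sup>2 \<le> (cos a)\<^sup>2" "c^3 \<le> (cos a)^3" "(1 + a) * c * s \<le> (1 + a) * cos a * sin a"
    using cs assms by (auto intro!: power_mono mult_mono)
  moreover have "1 - a\<^sup>2 \<ge> 0"
    using a2 by simp
  \<comment> \<open>Bernstein expansion on [0,1]: all coefficients are nonnegative.\<close>
  moreover have "5/8 * (1 - a\<^sup>2) * (2 - c\<^sup>2) \<le> 3/4 * c^3 + (1 + a) * c * s"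
  proof -
    have "3/4 * c^3 + (1 + a) * c * s - 5/8 * (1 - a\<^sup>2) * (2 - c\<^sup>2) =
      1/8 * (1 - a)^6 + 7/4 * a * (1 - a)^5 + 27/4 * a^2 * (1 - a)^4 + 34/3 * a^3 * (1 - a)^3
      + 941/96 * a^4 * (1 - a)^2 + 75/16 * a^5 * (1 - a) + 89/96 * a^6"
      by (simp add: c_def s_def field_simps power_numeral_reduce power2_eq_square)
    also have "0 \<le> \<dots>"
      using assms by (intro add_nonneg_nonneg mult_nonneg_nonneg zero_le_power) auto
    finally show ?thesis
      by simp
  qed
  ultimately have "5/8 * (1 - a\<^sup>2) * (2 - (cos a)\<^sup>2) \<le> 5/8 * (1 - a\<^sup>2) * (2 - c\<^sup>2)"
    by (intro mult_left_mono) auto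
  with \<open>5/8 * (1 - a\<^sup>2) * (2 - c\<^sup>2) \<le> 3/4 * c^3 + (1 + a) * c * s\<close> show ?thesis
    using \<open>c^3 \<le> (cos a)^3\<close> \<open>(1 + a) * c * s \<le> (1 + a) * cos a * sin a\<close> by linarith
qed

lemma cosh_sinh_estimate:
  fixes a y :: real
  assumes "0 \<le> a" "a \<le> 1" "\<bar>y\<bar> \<le> 1"
  shows "(1 - a\<^sup>2) * (cosh y - 1) * (cosh y + 1 - (cos a)\<^sup>2)
    \<le> 3/4 * y\<^sup>2 * cos a * ((cos a)\<^sup>2 + (sinh y)\<^sup>2) + (1 + a) * cos a * sin a * (y * sinh y)"
proof -
  define t A B where "t = y\<^sup>2" and "A = cos a" and "B = sin a"
  have a_pi: "a \<le> pi/2"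
    using assms pi_gt3 by linarith
  have a2: "a\<^sup>2 \<le> 1"
    using assms by (simp add: power_le_one)
  have t: "0 \<le> t" "t \<le> 1"
    using assms by (simp_all add: t_def abs_square_le_1)
  have A: "1 - a\<^sup>2/2 \<le> A" "A \<le> 1" "0 \<le> A"
    using cos_Taylor_bounds(1)[OF assms(1) a_pi] a2 by (simp_all add: A_def)
  have B: "0 \<le> B"
    using assms pi_gt3 by (auto simp: B_def intro!: sin_ge_zero)
  have C: "0 \<le> cosh y - 1" "cosh y - 1 \<le> 5/8 * t"
    using cosh_real_ge_1[of y] cosh_minus_one_le[OF assms(3)] by (simp_all add: t_def)
  have "A\<^sup>2 \<le> 1"
    using A by (simp add: power_le_one)
  then have "(1 - a\<^sup>2) * (cosh y - 1) * (cosh y + 1 - A\<^sup>2) \<le> (1 - a\<^sup>2) * (5/8 * t) * (2 + 5/8 * t - A\<^sup>2)"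
    using C a2 by (intro mult_mono) auto
  also have "\<dots> = t * (5/8 * (1 - a\<^sup>2) * (2 - A\<^sup>2)) + t\<^sup>2 * (25/64 * (1 - a\<^sup>2))"
    by (simp add: field_simps power2_eq_square)
  also have "\<dots> \<le> t * (3/4 * A^3 + (1 + a) * A * B) + t\<^sup>2 * (3/4 * A)"
  proof (intro add_mono mult_left_mono)
    show "5/8 * (1 - a\<^sup>2) * (2 - A\<^sup>2) \<le> 3/4 * A^3 + (1 + a) * A * B"
      using cos_sin_polynomial_estimate[OF assms(1,2)] by (simp add: A_def B_def)
    show "25/64 * (1 - a\<^sup>2) \<le> 3/4 * A"
      using A(1) zero_le_power2[of a] unfolding right_diff_distrib by linarith
  qed (use t in auto)
  also have "\<dots> = 3/4 * t * A * (A\<^sup>2 + t) + (1 + a) * A * B * t"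
    by (simp add: algebra_simps power2_eq_square eval_nat_numeral)
  also have "\<dots> \<le> 3/4 * t * A * (A\<^sup>2 + (sinh y)\<^sup>2) + (1 + a) * A * B * (y * sinh y)"
    using power2_le_sinh_power2[of y] power2_le_mult_sinh[of y] t A B assms(1)
    by (intro add_mono mult_left_mono) (auto simp: t_def)
  finally show ?thesis
    by (simp add: t_def A_def B_def)
qed

lemma cos_cosh_lower_estimate:
  fixes a y r :: real
  assumes "0 \<le> a" "a < 1" "\<bar>y\<bar> \<le> 1" "y\<^sup>2 \<le> r * (1 + a)"
  shows "((1 - a) / cos a - 3/4 * r) * ((cos a)\<^sup>2 + (sinh y)\<^sup>2)
    \<le> (1 - a) * cos a * cosh y + y * sin a * sinh y"
proof -
  define A D N where "A = cos a" and "D = (cos a)\<^sup>2 + (sinh y)\<^sup>2"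
    and "N = (1 - a) * cos a * cosh y + y * sin a * sinh y"
  have A: "0 < A"
    using assms pi_gt3 by (simp add: A_def cos_gt_zero_pi)
  then have D: "0 < D"
    by (simp add: D_def A_def add_pos_nonneg)
  have D_eq: "D = A\<^sup>2 + (cosh y)\<^sup>2 - 1"
    by (simp add: D_def A_def cosh_square_eq)
  have "((1 - a) / A - 3/4 * r) * D * (A * (1 + a)) = (1 - a\<^sup>2) * D - 3/4 * (r * (1 + a)) * (A * D)"
    using A by (simp add: field_simps power2_eq_square)
  also have "\<dots> \<le> (1 - a\<^sup>2) * D - 3/4 * y\<^sup>2 * (A * D)"
    using assms(4) A D by (simp add: mult_right_mono)
  also have "\<dots> \<le> N * (A * (1 + a))"
  proof -
    \<comment> \<open>as sinh y ^ 2 = cosh y ^ 2 - 1, the two sides differ exactly as those of cosh_sinh_estimate\<close>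
    have "(1 - a\<^sup>2) * D - (1 - a\<^sup>2) * A\<^sup>2 * cosh y = (1 - a\<^sup>2) * (cosh y - 1) * (cosh y + 1 - A\<^sup>2)"
      by (simp add: D_eq algebra_simps power2_eq_square)
    moreover have "N * (A * (1 + a)) = (1 - a\<^sup>2) * A\<^sup>2 * cosh y + (1 + a) * A * sin a * (y * sinh y)"
      by (simp add: N_def A_def algebra_simps power2_eq_square)
    moreover have "3/4 * y\<^sup>2 * (A * D) = 3/4 * y\<^sup>2 * A * D"
      by simp
    ultimately show ?thesis
      using cosh_sinh_estimate[of a y] assms unfolding A_def D_def by linarith
  qed
  finally have "((1 - a) / A - 3/4 * r) * D \<le> N"
    using A assms(1) by (simp add: mult_le_cancel_right_pos)
  then show ?thesis
    by (simp add: A_def D_def N_def)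
qed

lemma Re_cos_cosh:
  fixes w :: complex
  shows "Re (cos w) = cos (Re w) * cosh (Im w)"
  by (simp add: Re_cos cosh_def)

lemma Im_cos_sinh:
  fixes w :: complex
  shows "Im (cos w) = - (sin (Re w) * sinh (Im w))"
  by (simp add: Im_cos sinh_def field_simps)

lemma norm_cos_squared:
  fixes w :: complex
  shows "(norm (cos w))\<^sup>2 = (cos (Re w))\<^sup>2 + (sinh (Im w))\<^sup>2"
proof -
  have "(norm (cos w))\<^sup>2 = (cos (Re w))\<^sup>2 * (cosh (Im w))\<^sup>2 + (sin (Re w))\<^sup>2 * (sinh (Im w))\<^sup>2"
    by (simp add: cmod_power2 Re_cos_cosh Im_cos_sinh power_mult_distrib)
  also have "\<dots> = (cos (Re w))\<^sup>2 + (sinh (Im w))\<^sup>2"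
    by (simp add: cosh_square_eq sin_squared_eq algebra_simps)
  finally show ?thesis .
qed

lemma cos_norm_le_norm_cos:
  fixes w :: complex
  assumes "norm w \<le> pi"
  shows "cos (norm w) \<le> norm (cos w)"
proof -
  have "cos (norm w) \<le> cos \<bar>Re w\<bar>"
    using abs_Re_le_cmod[of w] assms by (intro cos_monotone_0_pi_le) auto
  also have "\<dots> \<le> \<bar>cos (Re w)\<bar> * cosh (Im w)"
    using mult_left_mono[OF cosh_real_ge_1[of "Im w"] abs_ge_zero[of "cos (Re w)"]]
      abs_ge_self[of "cos (Re w)"] by simp
  also have "\<dots> = \<bar>Re (cos w)\<bar>"
    by (simp add: Re_cos_cosh abs_mult)
  also have "\<dots> \<le> norm (cos w)"
    by (rule abs_Re_le_cmod)
  finally show ?thesis .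
qed

lemma cos_norm_pos:
  fixes w :: complex
  assumes "norm w < pi/2"
  shows "0 < cos (norm w)"
  using assms pi_gt_zero norm_ge_zero[of w] by (intro cos_gt_zero_pi) linarith+

lemma cos_nonzero_if_norm_less:
  fixes w :: complex
  assumes "norm w < pi/2"
  shows "cos w \<noteq> 0"
  using cos_norm_le_norm_cos[of w] cos_norm_pos[OF assms] assms pi_gt_zero by force

lemma Re_one_plus_div_cos:
  fixes w :: complex
  shows "Re ((1 + w) / cos w) =
    ((1 + Re w) * cos (Re w) * cosh (Im w) - Im w * sin (Re w) * sinh (Im w))
      / ((cos (Re w))\<^sup>2 + (sinh (Im w))\<^sup>2)"
  by (simp add: Re_divide' norm_cos_squared Re_cos_cosh Im_cos_sinh)

lemma Re_one_plus_div_cos_le: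
  fixes w :: complex
  assumes "norm w < pi/2"
  shows "Re ((1 + w) / cos w) \<le> (1 + norm w) / cos (norm w)"
proof -
  have "Re ((1 + w) / cos w) \<le> norm (1 + w) / norm (cos w)"
    using complex_Re_le_cmod by (metis norm_divide)
  also have "\<dots> \<le> (1 + norm w) / cos (norm w)"
    using cos_norm_le_norm_cos[of w] cos_norm_pos[OF assms] assms pi_gt_zero norm_triangle_ineq[of 1 w]
    by (intro frac_le) auto
  finally show ?thesis .
qed

lemma Re_one_plus_div_cos_ge_left:
  fixes w :: complex
  assumes "Re w \<le> 0" "norm w < 1"
  shows "(1 - norm w) / cos (norm w) \<le> Re ((1 + w) / cos w)"
proof -
  define a y \<rho> where "a = - Re w" and "y = Im w" and "\<rho> = norm w"
  have a: "0 \<le> a" "a \<le> \<rho>" "\<rho> < 1"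
    using assms abs_Re_le_cmod[of w] by (auto simp: a_def \<rho>_def)
  have y: "\<bar>y\<bar> \<le> 1"
    using abs_Im_le_cmod[of w] assms by (simp add: y_def)
  have "y\<^sup>2 = (\<rho> - a) * (\<rho> + a)"
    using cmod_power2[of w] by (simp add: a_def y_def \<rho>_def algebra_simps power2_eq_square)
  also have "\<dots> \<le> (\<rho> - a) * (1 + a)"
    using a by (intro mult_left_mono) auto
  finally have y_sq: "y\<^sup>2 \<le> (\<rho> - a) * (1 + a)" .
  have "0 < cos a"
    using a pi_gt3 by (intro cos_gt_zero_pi) auto
  then have D: "0 < (cos a)\<^sup>2 + (sinh y)\<^sup>2"
    by (simp add: add_pos_nonneg)
  have "(1 - \<rho>) / cos \<rho> * ((cos a)\<^sup>2 + (sinh y)\<^sup>2)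
      \<le> ((1 - a) / cos a - 3/4 * (\<rho> - a)) * ((cos a)\<^sup>2 + (sinh y)\<^sup>2)"
    using one_minus_div_cos_slope[of a \<rho>] a D unfolding right_diff_distrib
    by (intro mult_right_mono) linarith+
  also have "\<dots> \<le> (1 - a) * cos a * cosh y + y * sin a * sinh y"
    using a y y_sq by (intro cos_cosh_lower_estimate) auto
  finally have "(1 - \<rho>) / cos \<rho> \<le> ((1 - a) * cos a * cosh y + y * sin a * sinh y) / ((cos a)\<^sup>2 + (sinh y)\<^sup>2)"
    using D by (simp add: pos_le_divide_eq)
  also have "\<dots> = Re ((1 + w) / cos w)"
    by (simp add: Re_one_plus_div_cos a_def y_def)
  finally show ?thesis
    by (simp add: \<rho>_def)
qed

lemma Re_one_plus_div_cos_reflect: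
  fixes w :: complex
  assumes "0 \<le> Re w" "norm w \<le> 1"
  shows "Re ((1 + - cnj w) / cos (- cnj w)) \<le> Re ((1 + w) / cos w)"
proof -
  define x y where "x = Re w" and "y = Im w"
  have "(norm w)\<^sup>2 \<le> 1"
    using assms by (simp add: power_le_one)
  then have "x\<^sup>2 + y\<^sup>2 \<le> 1"
    by (simp add: x_def y_def cmod_power2)
  then have "y * sin x * sinh y \<le> x * cos x * cosh y"
    using assms by (intro mult_sin_sinh_le_mult_cos_cosh) (simp_all add: x_def)
  then have "(1 - x) * cos x * cosh y + y * sin x * sinh y \<le> (1 + x) * cos x * cosh y - y * sin x * sinh y"
    by (simp add: algebra_simps)
  then have "((1 - x) * cos x * cosh y + y * sin x * sinh y) / ((cos x)\<^sup>2 + (sinh y)\<^sup>2)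
      \<le> ((1 + x) * cos x * cosh y - y * sin x * sinh y) / ((cos x)\<^sup>2 + (sinh y)\<^sup>2)"
    by (simp add: divide_right_mono)
  then show ?thesis
    unfolding Re_one_plus_div_cos by (simp add: x_def y_def)
qed

lemma Re_one_plus_div_cos_ge:
  fixes w :: complex
  assumes "norm w < 1"
  shows "(1 - norm w) / cos (norm w) \<le> Re ((1 + w) / cos w)"
proof (cases "Re w \<le> 0")
  case True
  then show ?thesis
    using Re_one_plus_div_cos_ge_left assms by blast
next
  case False
  then have "(1 - norm (- cnj w)) / cos (norm (- cnj w)) \<le> Re ((1 + - cnj w) / cos (- cnj w))"
    using assms by (intro Re_one_plus_div_cos_ge_left) auto
  also have "\<dots> \<le> Re ((1 + w) / cos w)"
    using False assms by (intro Re_one_plus_div_cos_reflect) auto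
  finally show ?thesis
    by simp
qed

section \<open>Subordination and the class Snc\<close>

lemma subordinate_value_in_smaller_disc:
  assumes "subordinate F G" "norm z < 1"
  obtains w where "norm w \<le> norm z" "F z = G w"
proof -
  obtain \<omega> where hol: "\<omega> holomorphic_on ball 0 1" and "\<omega> 0 = 0"
    and maps: "\<omega> ` ball 0 1 \<subseteq> ball 0 1" and eq: "\<forall>z\<in>ball 0 1. F z = G (\<omega> z)"
    using assms(1) unfolding subordinate_def by blast
  have "norm (\<omega> u) < 1" if "norm u < 1" for u
    using maps that by (auto simp: image_subset_iff)
  then have "norm (\<omega> z) \<le> norm z"
    using Schwarz_Lemma(1)[OF hol \<open>\<omega> 0 = 0\<close> _ assms(2)] by blast
  then show ?thesis
    using that eq assms(2) by auto
qed

lemma subordinate_if_eq_on_disc: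
  assumes "\<And>z. z \<in> ball 0 1 \<Longrightarrow> F z = G z"
  shows "subordinate F G"
  unfolding subordinate_def using assms by (intro exI[of _ "\<lambda>z. z"]) auto

lemma classA_with_prescribed_zf'_over_f:
  assumes hol: "\<phi> holomorphic_on ball 0 1" and "\<phi> 0 = 1"
  obtains f where "f \<in> classA" "\<And>z. z \<in> ball 0 1 \<Longrightarrow> zf'_over_f f z = \<phi> z"
proof -
  define q where "q = (\<lambda>z. if z = 0 then deriv \<phi> 0 else (\<phi> z - \<phi> 0) / (z - 0))"
  have "q holomorphic_on ball 0 1"
    unfolding q_def by (rule pole_lemma[OF hol]) simp
  then obtain g where g: "\<And>z. z \<in> ball 0 1 \<Longrightarrow> (g has_field_derivative q z) (at z)"
    using holomorphic_convex_primitive'[OF convex_ball open_ball] at_within_open[OF _ open_ball] by metis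
  \<comment> \<open>g is a primitive of (\<phi> w - 1) / w, so z f'(z) / f(z) = 1 + z g'(z) = \<phi> z\<close>
  define f where "f = (\<lambda>z. z * exp (g z - g 0))"
  have f': "(f has_field_derivative exp (g z - g 0) * (1 + z * q z)) (at z)" if "z \<in> ball 0 1" for z
    unfolding f_def by (rule derivative_eq_intros g[OF that] refl | simp add: algebra_simps)+
  have "f holomorphic_on ball 0 1"
    using f' holomorphic_on_open[OF open_ball] by blast
  moreover have "deriv f 0 = 1"
    using DERIV_imp_deriv[OF f'[of 0]] by simp
  ultimately have "f \<in> classA"
    by (simp add: classA_def f_def)
  moreover have "zf'_over_f f z = \<phi> z" if "z \<in> ball 0 1" for z
  proof (cases "z = 0")
    case False
    then have "1 + z * q z = \<phi> z"
      using \<open>\<phi> 0 = 1\<close> by (simp add: q_def)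
    then show ?thesis
      using DERIV_imp_deriv[OF f'[OF that]] False by (simp add: zf'_over_f_def f_def)
  qed (simp add: zf'_over_f_def \<open>\<phi> 0 = 1\<close>)
  ultimately show ?thesis
    using that by blast
qed

lemma Snc_value_in_smaller_disc:
  assumes "f \<in> Snc" "norm z < 1"
  obtains w where "norm w \<le> norm z" "zf'_over_f f z = (1 + w) / cos w"
  using assms subordinate_value_in_smaller_disc[of "zf'_over_f f" _ z] by (auto simp: Snc_def)

lemma Snc_Re_ge:
  assumes "f \<in> Snc" "z \<noteq> 0" "norm z < 1"
  shows "(1 - norm z) / cos (norm z) \<le> Re (z * deriv f z / f z)"
proof -
  obtain w where w: "norm w \<le> norm z" "zf'_over_f f z = (1 + w) / cos w"
    using Snc_value_in_smaller_disc assms(1,3) by blast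
  have "(1 - norm z) / cos (norm z) \<le> (1 - norm w) / cos (norm w)"
    using one_minus_div_cos_slope[of "norm w" "norm z"] w(1) assms(3) by simp
  also have "\<dots> \<le> Re ((1 + w) / cos w)"
    using w(1) assms(3) by (intro Re_one_plus_div_cos_ge) simp
  finally show ?thesis
    using w(2) assms(2) by (simp add: zf'_over_f_def)
qed

lemma Snc_Re_le:
  assumes "f \<in> Snc" "z \<noteq> 0" "norm z < 1"
  shows "Re (z * deriv f z / f z) \<le> (1 + norm z) / cos (norm z)"
proof -
  obtain w where w: "norm w \<le> norm z" "zf'_over_f f z = (1 + w) / cos w"
    using Snc_value_in_smaller_disc assms(1,3) by blast
  have "Re ((1 + w) / cos w) \<le> (1 + norm w) / cos (norm w)"
    using w(1) assms(3) pi_gt3 by (intro Re_one_plus_div_cos_le) simp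
  also have "\<dots> \<le> (1 + norm z) / cos (norm z)"
    using one_plus_div_cos_strict_mono[of "norm w" "norm z"] w(1) assms(3) pi_gt3
    by (cases "norm w = norm z") auto
  finally show ?thesis
    using w(2) assms(2) by (simp add: zf'_over_f_def)
qed

lemma Snc_Re_lt_in_disc:
  assumes "f \<in> Snc" "z \<noteq> 0" "norm z < r" "r \<le> 1"
  shows "Re (z * deriv f z / f z) < (1 + r) / cos r"
  using one_plus_div_cos_strict_mono[of "norm z" r] Snc_Re_le[of f z] assms pi_gt3 by force

lemma Snc_extremal_on_real_axis:
  obtains f where "f \<in> Snc"
    "\<And>x::real. x \<noteq> 0 \<Longrightarrow> \<bar>x\<bar> < 1 \<Longrightarrow> Re (of_real x * deriv f x / f x) = (1 + x) / cos x"
proof -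
  have "(\<lambda>w. (1 + w) / cos w) holomorphic_on ball 0 1"
    using cos_nonzero_if_norm_less pi_gt3 by (intro holomorphic_intros) auto
  then obtain f where "f \<in> classA" and f: "\<And>z. z \<in> ball 0 1 \<Longrightarrow> zf'_over_f f z = (1 + z) / cos z"
    using classA_with_prescribed_zf'_over_f[of "\<lambda>w. (1 + w) / cos w"] by auto
  moreover have "subordinate (zf'_over_f f) (\<lambda>w. (1 + w) / cos w)"
    using f by (rule subordinate_if_eq_on_disc)
  moreover have "Re (of_real x * deriv f x / f x) = (1 + x) / cos x" if "x \<noteq> 0" "\<bar>x\<bar> < 1" for x :: real
    using f[of "of_real x"] that by (simp add: zf'_over_f_def cos_of_real flip: of_real_add of_real_divide)
  ultimately show ?thesis
    using that by (simp add: Snc_def)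
qed

lemma Snc_starlike_order_radius:
  fixes \<alpha> r :: real
  assumes "f \<in> Snc" "z \<noteq> 0" "norm z < r" "r < 1" "(1 - r) - \<alpha> * cos r = 0"
  shows "\<alpha> < Re (z * deriv f z / f z)"
proof -
  have "0 < cos r"
    using assms(3,4) norm_ge_zero[of z] pi_gt3 by (intro cos_gt_zero_pi) linarith+
  then have "\<alpha> = (1 - r) / cos r"
    using assms(5) by (simp add: field_simps)
  also have "\<dots> < (1 - norm z) / cos (norm z)"
    using assms(3,4) by (intro one_minus_div_cos_strict_antimono) auto
  also have "\<dots> \<le> Re (z * deriv f z / f z)"
    using Snc_Re_ge[OF assms(1,2)] assms(3,4) by simp
  finally show ?thesis .
qed

lemma Snc_starlike_order_radius_sharp:
  fixes \<alpha> r r' :: real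
  assumes "0 < r" "r < 1" "(1 - r) - \<alpha> * cos r = 0" "r < r'"
  shows "\<exists>f\<in>Snc. \<exists>z. z \<noteq> 0 \<and> norm z < min r' 1 \<and> Re (z * deriv f z / f z) \<le> \<alpha>"
proof -
  obtain f where "f \<in> Snc"
    and f: "\<And>x::real. x \<noteq> 0 \<Longrightarrow> \<bar>x\<bar> < 1 \<Longrightarrow> Re (of_real x * deriv f x / f x) = (1 + x) / cos x"
    using Snc_extremal_on_real_axis by blast
  define x where "x = (r + min r' 1) / 2"
  have x: "r < x" "x < min r' 1"
    using assms by (auto simp: x_def)
  have "0 < cos r"
    using assms pi_gt3 by (intro cos_gt_zero_pi) auto
  have "Re (of_real (- x) * deriv f (of_real (- x)) / f (of_real (- x))) = (1 - x) / cos x"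
    using f[of "- x"] x assms by simp
  also have "\<dots> < (1 - r) / cos r"
    using x assms by (intro one_minus_div_cos_strict_antimono) auto
  also have "\<dots> = \<alpha>"
    using assms(3) \<open>0 < cos r\<close> by (simp add: field_simps)
  finally show ?thesis
    using \<open>f \<in> Snc\<close> x assms by (intro bexI[of _ f] exI[of _ "of_real (- x)"]) auto
qed

lemma Snc_Re_upper_radius:
  fixes \<beta> r :: real
  assumes "f \<in> Snc" "z \<noteq> 0" "norm z < r" "r < 1" "1 + r = \<beta> * cos r"
  shows "Re (z * deriv f z / f z) < \<beta>"
proof -
  have "0 < cos r"
    using assms(3,4) norm_ge_zero[of z] pi_gt3 by (intro cos_gt_zero_pi) linarith+
  have "Re (z * deriv f z / f z) < (1 + r) / cos r"
    using Snc_Re_lt_in_disc[OF assms(1-3)] assms(4) by simp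
  also have "\<dots> = \<beta>"
    using assms(5) \<open>0 < cos r\<close> by (simp add: field_simps)
  finally show ?thesis .
qed

lemma Snc_Re_upper_radius_sharp:
  fixes \<beta> r r' :: real
  assumes "0 < r" "r < 1" "1 + r = \<beta> * cos r" "r < r'"
  shows "\<exists>f\<in>Snc. \<exists>z. z \<noteq> 0 \<and> norm z < min r' 1 \<and> \<beta> \<le> Re (z * deriv f z / f z)"
proof -
  obtain f where "f \<in> Snc"
    and f: "\<And>x::real. x \<noteq> 0 \<Longrightarrow> \<bar>x\<bar> < 1 \<Longrightarrow> Re (of_real x * deriv f x / f x) = (1 + x) / cos x"
    using Snc_extremal_on_real_axis by blast
  define x where "x = (r + min r' 1) / 2"
  have x: "r < x" "x < min r' 1"
    using assms by (auto simp: x_def)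
  have "0 < cos r"
    using assms pi_gt3 by (intro cos_gt_zero_pi) auto
  have "\<beta> = (1 + r) / cos r"
    using assms(3) \<open>0 < cos r\<close> by (simp add: field_simps)
  also have "\<dots> < (1 + x) / cos x"
    using x assms pi_gt3 by (intro one_plus_div_cos_strict_mono) auto
  also have "\<dots> = Re (of_real x * deriv f (of_real x) / f (of_real x))"
    using f[of x] x assms by simp
  finally show ?thesis
    using \<open>f \<in> Snc\<close> x assms by (intro bexI[of _ f] exI[of _ "of_real x"]) auto
qed

lemma first_root_less_one:
  fixes \<beta> r :: real
  assumes "1 < \<beta>" "\<beta> < 2 / cos 1" and no_root: "\<forall>s. 0 < s \<and> s < r \<longrightarrow> 1 + s \<noteq> \<beta> * cos s"
  shows "r < 1"
proof -
  have "0 < cos (1::real)"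
    using pi_gt3 by (intro cos_gt_zero_pi) auto
  then have "\<beta> * cos 1 < 2"
    using assms(2) by (simp add: field_simps)
  moreover have "continuous_on {0..1} (\<lambda>s::real. 1 + s - \<beta> * cos s)"
    by (intro continuous_intros)
  ultimately obtain s where s: "0 \<le> s" "s \<le> 1" "1 + s - \<beta> * cos s = 0"
    using IVT'[of "\<lambda>s. 1 + s - \<beta> * cos s" 0 0 1] assms(1) by auto
  then have "0 < s" "s < 1"
    using assms(1) \<open>\<beta> * cos 1 < 2\<close> by (auto simp: order.order_iff_strict)
  then show "r < 1"
    using no_root s(3) by force
qed

theorem mainTheorem9:
  shows "(\<forall>(\<alpha>::real) r. 0 < \<alpha> \<and> \<alpha> < 1 \<and> 0 < r \<and> r < 1 \<and> (1 - r) - \<alpha> * cos r = 0 \<longrightarrow>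
            (\<forall>f\<in>Snc. \<forall>z. z \<noteq> 0 \<and> norm z < r \<longrightarrow> Re (z * deriv f z / f z) > \<alpha>) \<and>
            (\<forall>r'>r. \<exists>f\<in>Snc. \<exists>z. z \<noteq> 0 \<and> norm z < min r' 1 \<and> Re (z * deriv f z / f z) \<le> \<alpha>))
       \<and> (\<forall>(\<beta>::real) r. 1 < \<beta> \<and> \<beta> < 2 / cos 1 \<and> 0 < r \<and> 1 + r = \<beta> * cos r \<and>
                (\<forall>s. 0 < s \<and> s < r \<longrightarrow> 1 + s \<noteq> \<beta> * cos s) \<longrightarrow>
            (\<forall>f\<in>Snc. \<forall>z. z \<noteq> 0 \<and> norm z < r \<longrightarrow> Re (z * deriv f z / f z) < \<beta>) \<and>
            (\<forall>r'>r. \<exists>f\<in>Snc. \<exists>z. z \<noteq> 0 \<and> norm z < min r' 1 \<and> Re (z * deriv f z / f z) \<ge> \<beta>))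
       \<and> (\<forall>(\<beta>::real). \<beta> \<ge> 2 / cos 1 \<longrightarrow>
            (\<forall>f\<in>Snc. \<forall>z. z \<noteq> 0 \<and> norm z < 1 \<longrightarrow> Re (z * deriv f z / f z) < \<beta>))"
  apply (intro conjI allI impI ballI; elim conjE)
  subgoal by (rule Snc_starlike_order_radius)
  subgoal by (rule Snc_starlike_order_radius_sharp)
  subgoal by (rule Snc_Re_upper_radius) (auto intro: first_root_less_one)
  subgoal by (rule Snc_Re_upper_radius_sharp) (auto intro: first_root_less_one)
  subgoal for \<beta> f z
    using Snc_Re_lt_in_disc[of f z 1] by simp
  done

end
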